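(* Let $n>1$ be an odd integer, $k\ge1$, and $p$ the smallest prime divisor of $n$. Then $\mathrm{C}^{n,k}_{\mathrm{RDH}}$ is a $\frac{1}{(p-1)n^{k-1}},\frac{1}{p-1}$-authentication code with secrecy for equiprobable source states on $\mathbb{Z}_n^k\setminus\{\mathbf{0}\}$; that is, it provides $\frac{1}{(p-1)n^{k-1}}$-secrecy on $\mathbb{Z}_n^k\setminus\{\mathbf{0}\}$ and is $\frac{1}{p-1}$-secure against substitution attacks.
   Context: For $\mathbf{y}\in(\mathbb{Z}_n^* )^k$ and $\mathbf{m}\in\mathbb{Z}_n^k$ let $\Upsilon_{\mathbf{y}}(\mathbf{m})=\sum_{i=1}^k m_iy_i\bmod n$. The code $\mathrm{C}^{n,k}_{\mathrm{RDH}}$ has source states $\mathcal{S}=\mathbb{Z}_n^k$, keys $\mathcal{K}=\mathbb{Z}_n^k\times(\mathbb{Z}_n^* )^k$ (pairs $\mathbf{x}\|\mathbf{y}$), ciphertexts $\mathcal{M}=\mathbb{Z}_n^k\times\mathbb{Z}_n$ (pairs $\mathbf{c}\|t$). Encryption: $\mathcal{E}_{\mathbf{x}\|\mathbf{y}}(\mathbf{m})=(\mathbf{m}+\mathbf{x}\bmod n)\,\|\,\Upsilon_{\mathbf{y}}(\mathbf{m})$ (componentwise addition). Decryption: $\mathcal{D}_{\mathbf{x}\|\mathbf{y}}(\mathbf{c}\|t)=\mathbf{c}-\mathbf{x}\bmod n$ if $\Upsilon_{\mathbf{y}}(\mathbf{c}-\mathbf{x})=t$, and $\bot$ otherwise.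 Source states and keys are chosen uniformly and independently. The code provides $\varepsilon$-secrecy on $\mathcal{S}'\subseteq\mathcal{S}$ if for every $\mathbf{m}\in\mathcal{S}'$ and every $c\in\mathcal{M}$ (with the conditioning event of positive probability), $\Pr_{\mathbf{m}'\leftarrow\mathcal{S},\kappa\leftarrow\mathcal{K}}[\mathbf{m}'=\mathbf{m}\mid\mathcal{E}_\kappa(\mathbf{m}')=c]\le\varepsilon$. A forger is an arbitrary function $\mathcal{F}:\mathcal{M}\to\mathcal{M}$; the code is $\delta$-secure against substitution attacks if for every forger $\mathcal{F}$, $\Pr_{\mathbf{m}\leftarrow\mathcal{S},\kappa\leftarrow\mathcal{K}}[\mathcal{F}(c)\ne c\ \wedge\ \mathcal{D}_\kappa(\mathcal{F}(c))\ne\bot]\le\delta$ where $c=\mathcal{E}_\kappa(\mathbf{m})$. It is an $\varepsilon,\delta$-authentication code with secrecy for equiprobable source states on $\mathcal{S}'$ if both hold. *)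

theory Defs
  imports Complex_Main "HOL-Computational_Algebra.Primes"
begin

text \<open>Vectors in Z_n^k are represented as functions nat => int whose first k
 components lie in {0..<n} and which vanish from index k on.\<close>

definition vecs :: "int \<Rightarrow> nat \<Rightarrow> (nat \<Rightarrow> int) set" where
  "vecs n k = {m. (\<forall>i<k. 0 \<le> m i \<and> m i < n) \<and> (\<forall>i\<ge>k. m i = 0)}"

definition unit_vecs :: "int \<Rightarrow> nat \<Rightarrow> (nat \<Rightarrow> int) set" where
  "unit_vecs n k = {y \<in> vecs n k. \<forall>i<k. coprime (y i) n}"

definition zero_vec :: "nat \<Rightarrow> int" where
  "zero_vec = (\<lambda>i. 0)"

definition Upsilon :: "int \<Rightarrow> nat \<Rightarrow> (nat \<Rightarrow> int) \<Rightarrow> (nat \<Rightarrow> int) \<Rightarrow> int" where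
  "Upsilon n k y m = (\<Sum>i<k. m i * y i) mod n"

definition sources :: "int \<Rightarrow> nat \<Rightarrow> (nat \<Rightarrow> int) set" where
  "sources n k = vecs n k"

definition keys :: "int \<Rightarrow> nat \<Rightarrow> ((nat \<Rightarrow> int) \<times> (nat \<Rightarrow> int)) set" where
  "keys n k = vecs n k \<times> unit_vecs n k"

definition ciphertexts :: "int \<Rightarrow> nat \<Rightarrow> ((nat \<Rightarrow> int) \<times> int) set" where
  "ciphertexts n k = vecs n k \<times> {0..<n}"

definition enc :: "int \<Rightarrow> nat \<Rightarrow> (nat \<Rightarrow> int) \<times> (nat \<Rightarrow> int) \<Rightarrow> (nat \<Rightarrow> int)
                    \<Rightarrow> (nat \<Rightarrow> int) \<times> int" where
  "enc n k key m = (case key of (x, y) \<Rightarrow>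
      ((\<lambda>i. if i < k then (m i + x i) mod n else 0), Upsilon n k y m))"

text \<open>Decryption; None plays the role of bottom.\<close>
definition dec :: "int \<Rightarrow> nat \<Rightarrow> (nat \<Rightarrow> int) \<times> (nat \<Rightarrow> int) \<Rightarrow> (nat \<Rightarrow> int) \<times> int
                    \<Rightarrow> (nat \<Rightarrow> int) option" where
  "dec n k key ct = (case key of (x, y) \<Rightarrow> case ct of (c, t) \<Rightarrow>
      (let m = (\<lambda>i. if i < k then (c i - x i) mod n else 0)
       in if Upsilon n k y m = t then Some m else None))"

text \<open>Probabilities with m' and kappa uniform and independent, as counting ratios
 over sources x keys.\<close>
definition prob_enc_eq :: "int \<Rightarrow> nat \<Rightarrow> ((nat \<Rightarrow> int) \<times> int) \<Rightarrow> real" where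
  "prob_enc_eq n k c =
     real (card {(m', \<kappa>) \<in> sources n k \<times> keys n k. enc n k \<kappa> m' = c})
     / real (card (sources n k \<times> keys n k))"

definition cond_prob_source :: "int \<Rightarrow> nat \<Rightarrow> (nat \<Rightarrow> int) \<Rightarrow> ((nat \<Rightarrow> int) \<times> int) \<Rightarrow> real" where
  "cond_prob_source n k m c =
     real (card {(m', \<kappa>) \<in> sources n k \<times> keys n k. m' = m \<and> enc n k \<kappa> m' = c})
     / real (card {(m', \<kappa>) \<in> sources n k \<times> keys n k. enc n k \<kappa> m' = c})"

definition provides_secrecy :: "int \<Rightarrow> nat \<Rightarrow> real \<Rightarrow> (nat \<Rightarrow> int) set \<Rightarrow> bool" where
  "provides_secrecy n k \<epsilon> S' \<longleftrightarrow>
     (\<forall>m \<in> S'. \<forall>c \<in> ciphertexts n k. prob_enc_eq n k c > 0 \<longrightarrow>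
        cond_prob_source n k m c \<le> \<epsilon>)"

definition subst_success_prob ::
  "int \<Rightarrow> nat \<Rightarrow> ((nat \<Rightarrow> int) \<times> int \<Rightarrow> (nat \<Rightarrow> int) \<times> int) \<Rightarrow> real" where
  "subst_success_prob n k F =
     real (card {(m, \<kappa>) \<in> sources n k \<times> keys n k.
                   F (enc n k \<kappa> m) \<noteq> enc n k \<kappa> m \<and> dec n k \<kappa> (F (enc n k \<kappa> m)) \<noteq> None})
     / real (card (sources n k \<times> keys n k))"

definition secure_against_substitution :: "int \<Rightarrow> nat \<Rightarrow> real \<Rightarrow> bool" where
  "secure_against_substitution n k \<delta> \<longleftrightarrow>
     (\<forall>F. (\<forall>c \<in> ciphertexts n k. F c \<in> ciphertexts n k) \<longrightarrow> subst_success_prob n k F \<le> \<delta>)"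

definition auth_code_with_secrecy :: "int \<Rightarrow> nat \<Rightarrow> real \<Rightarrow> real \<Rightarrow> (nat \<Rightarrow> int) set \<Rightarrow> bool" where
  "auth_code_with_secrecy n k \<epsilon> \<delta> S' \<longleftrightarrow>
     provides_secrecy n k \<epsilon> S' \<and> secure_against_substitution n k \<delta>"

end

(*
  Both bounds come from rescaling one coordinate: for a unit u modulo n, replacing m_j by
  u^-1 m_j and y_j by u y_j leaves the tag sum m_i y_i unchanged. Since every prime divisor of n
  is at least p, the numbers 1, ..., p - 1 and their pairwise differences are units modulo n.

  Secrecy: given the ciphertext (c, t) and a source m with m_j \<noteq> 0, a consistent key is determined
  by its y, which must satisfy sum m_i y_i = t. Multiplying y_j by u = 1, ..., p - 1 maps these y
  injectively into (Z_n^* )^k, so there are at most |(Z_n^* )^k| / (p - 1) of them, whereas every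
  y admits n^(k-1) sources with tag t.

  Substitution: if a forgery c' \<noteq> c is accepted under the key (x, y), the difference d = c' - c
  satisfies sum d_i y_i = t' - t with d_j \<noteq> 0 at the first coordinate j where c' differs from c.
  Rescaling coordinate j of the source by u^-1 and of y by u keeps the ciphertext, and the relation
  for d recovers u and y; so each successful (source, key) pair accounts for p - 1 distinct pairs.
*)

theory Submission
  imports Defs "HOL-Number_Theory.Modular_Inverse"
begin

lemma bij_betw_restrict_vecs:
  "bij_betw (\<lambda>m. restrict m {..<k}) (vecs n k) (PiE {..<k} (\<lambda>_. {0..<n}))"
proof (rule bij_betw_byWitness[where f' = "\<lambda>f i. if i < k then f i else 0"])
  show "\<forall>m\<in>vecs n k. (\<lambda>i. if i < k then restrict m {..<k} i else 0) = m"
    by (auto simp: vecs_def fun_eq_iff)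
  show "\<forall>f\<in>PiE {..<k} (\<lambda>_. {0..<n}). restrict (\<lambda>i. if i < k then f i else 0) {..<k} = f"
    by (auto simp: PiE_def extensional_def fun_eq_iff)
qed (auto simp: vecs_def PiE_def Pi_def)

lemma finite_vecs: "finite (vecs n k)"
  using bij_betw_finite[OF bij_betw_restrict_vecs] by (simp add: finite_PiE)

lemma card_vecs: "card (vecs n k) = nat n ^ k"
  using bij_betw_same_card[OF bij_betw_restrict_vecs] by (simp add: card_PiE)

lemma finite_unit_vecs: "finite (unit_vecs n k)"
  using finite_vecs by (simp add: unit_vecs_def)

lemma finite_keys: "finite (keys n k)"
  by (simp add: keys_def finite_vecs finite_unit_vecs)

lemma vecs_eqI:
  assumes "a \<in> vecs n k" "b \<in> vecs n k" "\<And>i. i < k \<Longrightarrow> [a i = b i] (mod n)"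
  shows "a = b"
proof
  fix i
  show "a i = b i"
    using assms by (cases "i < k") (auto simp: vecs_def intro: cong_less_imp_eq_int)
qed

definition vec_diff :: "int \<Rightarrow> nat \<Rightarrow> (nat \<Rightarrow> int) \<Rightarrow> (nat \<Rightarrow> int) \<Rightarrow> nat \<Rightarrow> int" where
  "vec_diff n k a b = (\<lambda>i. if i < k then (a i - b i) mod n else 0)"

lemma vec_diff_in_vecs: "n > 0 \<Longrightarrow> vec_diff n k a b \<in> vecs n k"
  by (simp add: vec_diff_def vecs_def)

lemma enc_vec_diff:
  assumes "c \<in> vecs n k"
  shows "enc n k (vec_diff n k c m, y) m = (c, Upsilon n k y m)"
proof -
  have "(\<lambda>i. if i < k then (m i + vec_diff n k c m i) mod n else 0) = c"
  proof
    fix i show "(if i < k then (m i + vec_diff n k c m i) mod n else 0) = c i"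
      using assms by (auto simp: vec_diff_def vecs_def mod_add_right_eq)
  qed
  then show ?thesis by (simp add: enc_def)
qed

lemma enc_key_unique:
  assumes "x \<in> vecs n k" "x' \<in> vecs n k" "fst (enc n k (x, y) m) = fst (enc n k (x', y') m)"
  shows "x = x'"
proof (rule vecs_eqI[OF assms(1,2)])
  fix i assume "i < k"
  have "fst (enc n k (x, y) m) i = fst (enc n k (x', y') m) i"
    using assms(3) by simp
  then have "[m i + x i = m i + x' i] (mod n)"
    using \<open>i < k\<close> by (simp add: enc_def cong_def)
  then show "[x i = x' i] (mod n)" by (simp add: cong_add_lcancel)
qed

lemma enc_in_ciphertexts: "n > 0 \<Longrightarrow> enc n k \<kappa> m \<in> ciphertexts n k"
  by (auto simp: enc_def ciphertexts_def vecs_def Upsilon_def split: prod.split)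

lemma coprime_if_less_prime_divisors:
  fixes d n p :: int
  assumes "\<forall>q. prime q \<and> q dvd n \<longrightarrow> p \<le> q" "0 < d" "d < p"
  shows "coprime d n"
proof (rule ccontr)
  assume "\<not> coprime d n"
  then have "\<not> is_unit (gcd d n)" "gcd d n \<noteq> 0"
    using \<open>0 < d\<close> by (auto simp: is_unit_gcd)
  then obtain q where "prime q" "q dvd gcd d n"
    using prime_divisor_exists by blast
  then have "prime q" "q dvd d" "q dvd n"
    by auto
  then have "q \<le> d" using \<open>0 < d\<close> zdvd_imp_le by blast
  moreover have "p \<le> q" using assms(1) \<open>prime q\<close> \<open>q dvd n\<close> by blast
  ultimately show False using \<open>d < p\<close> by simp
qed

definition scale_at :: "int \<Rightarrow> nat \<Rightarrow> int \<Rightarrow> (nat \<Rightarrow> int) \<Rightarrow> nat \<Rightarrow> int" where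
  "scale_at n j u y = y(j := u * y j mod n)"

lemma scale_at_in_vecs:
  "n > 0 \<Longrightarrow> j < k \<Longrightarrow> a \<in> vecs n k \<Longrightarrow> scale_at n j u a \<in> vecs n k"
  by (simp add: scale_at_def vecs_def)

lemma scale_at_in_unit_vecs:
  assumes "n > 0" "j < k" "y \<in> unit_vecs n k" "coprime u n"
  shows "scale_at n j u y \<in> unit_vecs n k"
proof -
  have "coprime (u * y j mod n) n"
    using assms by (simp add: unit_vecs_def coprime_mod_left_iff)
  then show ?thesis
    using assms by (auto simp: unit_vecs_def scale_at_def vecs_def)
qed

lemma Upsilon_scale_at:
  assumes "j < k" "[w * u = 1] (mod n)"
  shows "Upsilon n k (scale_at n j u y) (scale_at n j w m) = Upsilon n k y m"
proof -
  let ?rest = "\<lambda>y m. \<Sum>i\<in>{..<k} - {j}. m i * y i"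
  have split: "(\<Sum>i<k. m i * y i) = m j * y j + ?rest y m" for m y :: "nat \<Rightarrow> int"
    using assms(1) by (simp add: sum.remove)
  have rest: "?rest (scale_at n j u y) (scale_at n j w m) = ?rest y m"
    by (intro sum.cong) (auto simp: scale_at_def)
  have "[(w * m j mod n) * (u * y j mod n) = (m j * y j) * (w * u)] (mod n)"
    by (simp add: cong_def mod_mult_eq ac_simps)
  also have "[(m j * y j) * (w * u) = (m j * y j) * 1] (mod n)"
    using assms(2) by (intro cong_mult) auto
  finally have "[(w * m j mod n) * (u * y j mod n) + ?rest y m = m j * y j + ?rest y m] (mod n)"
    by (simp add: cong_add_rcancel)
  then show ?thesis
    unfolding Upsilon_def split[of "scale_at n j w m"] split[of m] rest
    by (simp add: scale_at_def cong_def)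
qed

lemma scale_at_cancel:
  assumes "coprime u n" "j < k" "a \<in> vecs n k" "b \<in> vecs n k"
    and "scale_at n j u a = scale_at n j u b"
  shows "a = b"
proof (rule vecs_eqI[OF assms(3,4)])
  fix i assume "i < k"
  show "[a i = b i] (mod n)"
  proof (cases "i = j")
    case True
    then have "[u * a i = u * b i] (mod n)"
      using fun_cong[OF assms(5), of j] by (simp add: scale_at_def cong_def)
    with \<open>coprime u n\<close> show ?thesis
      by (simp add: cong_mult_lcancel)
  next
    case False
    then show ?thesis
      using fun_cong[OF assms(5), of i] by (simp add: scale_at_def)
  qed
qed

text \<open>This is where the smallest prime divisor p enters: for distinct u, v in the range
  0 < u, v < p, the difference u - v is a unit modulo n.\<close>

lemma scale_at_inj:
  fixes a y z :: "nat \<Rightarrow> int" and n p u v :: int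
  assumes pmin: "\<forall>q. prime q \<and> q dvd n \<longrightarrow> p \<le> q"
    and "j < k" "\<not> n dvd a j" "y \<in> unit_vecs n k" "z \<in> unit_vecs n k"
    and sum: "[(\<Sum>i<k. a i * y i) = (\<Sum>i<k. a i * z i)] (mod n)"
    and uv: "u \<in> {0<..<p}" "v \<in> {0<..<p}"
    and eq: "scale_at n j u y = scale_at n j v z"
  shows "u = v \<and> y = z"
proof -
  have off_j: "y i = z i" if "i \<noteq> j" for i
    using fun_cong[OF eq, of i] that by (simp add: scale_at_def)
  have "(\<Sum>i<k. a i * y i) - (\<Sum>i<k. a i * z i) = (\<Sum>i<k. if i = j then a j * (y j - z j) else 0)"
    unfolding sum_subtractf[symmetric] by (intro sum.cong) (auto simp: off_j right_diff_distrib)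
  also have "\<dots> = a j * (y j - z j)"
    using \<open>j < k\<close> by simp
  finally have aj: "[a j * y j = a j * z j] (mod n)"
    using sum by (simp add: cong_iff_dvd_diff right_diff_distrib dvd_diff_commute)
  have uy_vz: "[u * y j = v * z j] (mod n)"
    using fun_cong[OF eq, of j] by (simp add: scale_at_def cong_def)
  have "[a j * y j * u = a j * (v * z j)] (mod n)"
    using cong_mult[OF cong_refl[of "a j"] uy_vz] by (simp add: ac_simps)
  also have "[a j * (v * z j) = a j * y j * v] (mod n)"
    using cong_mult[OF cong_refl[of v] cong_sym[OF aj]] by (simp add: ac_simps)
  finally have "[a j * y j * u = a j * y j * v] (mod n)" .
  then have dvd: "n dvd a j * y j * (u - v)"
    by (simp add: cong_iff_dvd_diff right_diff_distrib dvd_diff_commute)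
  have "coprime (y j) n"
    using \<open>y \<in> unit_vecs n k\<close> \<open>j < k\<close> by (simp add: unit_vecs_def)
  have "u = v"
  proof (rule ccontr)
    assume "u \<noteq> v"
    then have "coprime \<bar>u - v\<bar> n"
      using uv by (intro coprime_if_less_prime_divisors[OF pmin]) auto
    then have "n dvd a j"
      using dvd \<open>coprime (y j) n\<close>
      by (simp add: coprime_commute coprime_dvd_mult_left_iff)
    with \<open>\<not> n dvd a j\<close> show False ..
  qed
  have "coprime u n"
    using uv by (intro coprime_if_less_prime_divisors[OF pmin]) auto
  moreover note \<open>j < k\<close>
  moreover have "y \<in> vecs n k" "z \<in> vecs n k"
    using assms(4,5) by (simp_all add: unit_vecs_def)
  ultimately have "y = z"
    using eq[unfolded \<open>u = v\<close>[symmetric]] by (rule scale_at_cancel)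
  with \<open>u = v\<close> show ?thesis ..
qed

lemma card_enc_fixed_source_le:
  "card {(m', \<kappa>) \<in> sources n k \<times> keys n k. m' = m \<and> enc n k \<kappa> m' = c}
     \<le> card {y \<in> unit_vecs n k. Upsilon n k y m = snd c}"
proof (rule card_inj_on_le[where f = "\<lambda>(m', x, y). y"])
  show "inj_on (\<lambda>(m', x, y). y) {(m', \<kappa>) \<in> sources n k \<times> keys n k. m' = m \<and> enc n k \<kappa> m' = c}"
    by (rule inj_onI) (clarsimp simp: keys_def, metis enc_key_unique)
qed (auto simp: keys_def enc_def finite_unit_vecs)

lemma card_unit_vecs_Upsilon_eq_le:
  assumes pmin: "\<forall>q. prime q \<and> q dvd n \<longrightarrow> p \<le> q"
    and "n > 0" "j < k" "\<not> n dvd m j"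
  shows "card {y \<in> unit_vecs n k. Upsilon n k y m = t} * nat (p - 1) \<le> card (unit_vecs n k)"
proof -
  let ?Y = "{y \<in> unit_vecs n k. Upsilon n k y m = t}"
  let ?f = "\<lambda>(y, u). scale_at n j u y"
  have "card (?Y \<times> {0<..<p}) \<le> card (unit_vecs n k)"
  proof (rule card_inj_on_le[where f = ?f])
    show "?f ` (?Y \<times> {0<..<p}) \<subseteq> unit_vecs n k"
    proof (rule image_subsetI)
      fix w assume "w \<in> ?Y \<times> {0<..<p}"
      then obtain y u where "w = (y, u)" "y \<in> unit_vecs n k" "0 < u" "u < p"
        by auto
      moreover have "coprime u n"
        using pmin \<open>0 < u\<close> \<open>u < p\<close> by (rule coprime_if_less_prime_divisors)
      ultimately show "?f w \<in> unit_vecs n k"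
        using \<open>n > 0\<close> \<open>j < k\<close> by (simp add: scale_at_in_unit_vecs)
    qed
    show "inj_on ?f (?Y \<times> {0<..<p})"
    proof (rule inj_onI)
      fix w w' assume "w \<in> ?Y \<times> {0<..<p}" "w' \<in> ?Y \<times> {0<..<p}" "?f w = ?f w'"
      obtain y u z v where w: "w = (y, u)" and w': "w' = (z, v)"
        by (cases w, cases w') simp
      with \<open>w \<in> ?Y \<times> {0<..<p}\<close> \<open>w' \<in> ?Y \<times> {0<..<p}\<close>
      have y: "y \<in> ?Y" and z: "z \<in> ?Y" and u: "u \<in> {0<..<p}" and v: "v \<in> {0<..<p}"
        by simp_all
      from \<open>?f w = ?f w'\<close> have eq: "scale_at n j u y = scale_at n j v z"
        by (simp add: w w')
      have "[(\<Sum>i<k. m i * y i) = (\<Sum>i<k. m i * z i)] (mod n)"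
        using y z by (simp add: Upsilon_def cong_def)
      then have "u = v \<and> y = z"
        using y z by (intro scale_at_inj[where a = m, OF pmin \<open>j < k\<close> \<open>\<not> n dvd m j\<close> _ _ _ u v eq]) auto
      then show "w = w'"
        using w w' by simp
    qed
  qed (simp add: finite_unit_vecs)
  then show ?thesis
    by (simp only: card_cartesian_product card_greaterThanLessThan_int add_0)
qed

lemma card_vecs_Upsilon_eq_ge:
  assumes "n > 0" "y \<in> unit_vecs n (Suc k)" "t \<in> {0..<n}"
  shows "nat n ^ k \<le> card {m \<in> vecs n (Suc k). Upsilon n (Suc k) y m = t}"
proof -
  define lift where "lift w = (\<lambda>i. if i = 0
      then (t - (\<Sum>i<k. w i * y (Suc i))) * modular_inverse n (y 0) mod n
      else w (i - 1))" for w :: "nat \<Rightarrow> int"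
  have "card (vecs n k) \<le> card {m \<in> vecs n (Suc k). Upsilon n (Suc k) y m = t}"
  proof (rule card_inj_on_le[where f = lift])
    show "inj_on lift (vecs n k)"
    proof (rule inj_onI)
      fix w w' assume "lift w = lift w'"
      then show "w = w'"
        by (auto simp: lift_def fun_eq_iff dest: spec[of _ "Suc _"])
    qed
    show "lift ` vecs n k \<subseteq> {m \<in> vecs n (Suc k). Upsilon n (Suc k) y m = t}"
    proof (rule image_subsetI)
      fix w assume "w \<in> vecs n k"
      then have "lift w \<in> vecs n (Suc k)"
        using \<open>n > 0\<close> by (auto simp: lift_def vecs_def less_Suc_eq_0_disj)
      let ?s = "\<Sum>i<k. w i * y (Suc i)"
      have "coprime (y 0) n"
        using assms(2) by (simp add: unit_vecs_def)
      have "[lift w 0 * y 0 = (t - ?s) * (y 0 * modular_inverse n (y 0))] (mod n)"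
        by (simp add: lift_def cong_def mod_mult_left_eq mod_mult_right_eq ac_simps)
      also have "[(t - ?s) * (y 0 * modular_inverse n (y 0)) = (t - ?s) * 1] (mod n)"
        using cong_modular_inverse1[OF \<open>coprime (y 0) n\<close>] by (intro cong_mult) auto
      finally have "[lift w 0 * y 0 + ?s = t] (mod n)"
        by (metis cong_add_rcancel diff_add_cancel mult_1_right)
      moreover have "Upsilon n (Suc k) y (lift w) = (lift w 0 * y 0 + ?s) mod n"
        unfolding Upsilon_def sum.lessThan_Suc_shift by (simp add: lift_def)
      ultimately have "Upsilon n (Suc k) y (lift w) = t"
        using assms(3) by (simp add: cong_def)
      with \<open>lift w \<in> vecs n (Suc k)\<close>
      show "lift w \<in> {m \<in> vecs n (Suc k). Upsilon n (Suc k) y m = t}" by simp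
    qed
  qed (simp add: finite_vecs)
  then show ?thesis
    by (simp add: card_vecs)
qed

lemma card_enc_preimage_ge:
  assumes "n > 0" "c \<in> ciphertexts n (Suc k)"
  shows "card (unit_vecs n (Suc k)) * nat n ^ k
     \<le> card {(m, \<kappa>) \<in> sources n (Suc k) \<times> keys n (Suc k). enc n (Suc k) \<kappa> m = c}"
proof -
  let ?L = "\<lambda>y. {m \<in> vecs n (Suc k). Upsilon n (Suc k) y m = snd c}"
  let ?f = "\<lambda>(y, m). (m, vec_diff n (Suc k) (fst c) m, y)"
  have "card (unit_vecs n (Suc k)) * nat n ^ k \<le> (\<Sum>y\<in>unit_vecs n (Suc k). card (?L y))"
    using assms card_vecs_Upsilon_eq_ge[OF \<open>n > 0\<close>] sum_bounded_below[of "unit_vecs n (Suc k)" "nat n ^ k"]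
    by (auto simp: ciphertexts_def mult.commute)
  also have "\<dots> = card (SIGMA y:unit_vecs n (Suc k). ?L y)"
    by (simp add: finite_unit_vecs finite_vecs)
  also have "\<dots> \<le> card {(m, \<kappa>) \<in> sources n (Suc k) \<times> keys n (Suc k). enc n (Suc k) \<kappa> m = c}"
  proof (rule card_inj_on_le[where f = ?f])
    show "inj_on ?f (SIGMA y:unit_vecs n (Suc k). ?L y)"
      by (rule inj_onI) auto
    show "?f ` (SIGMA y:unit_vecs n (Suc k). ?L y)
          \<subseteq> {(m, \<kappa>) \<in> sources n (Suc k) \<times> keys n (Suc k). enc n (Suc k) \<kappa> m = c}"
      using assms by (auto simp: sources_def keys_def ciphertexts_def vec_diff_in_vecs enc_vec_diff)
  qed (auto intro: finite_subset[of _ "sources n (Suc k) \<times> keys n (Suc k)"]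
        simp: sources_def finite_vecs finite_keys)
  finally show ?thesis .
qed

lemma of_nat_divide_le_one_divide:
  fixes N D A :: nat
  assumes "N * A \<le> D" "0 < A"
  shows "real N / real D \<le> 1 / real A"
proof (cases "D = 0")
  case False
  have "real N * real A \<le> real D"
    using assms(1) by (metis of_nat_le_iff of_nat_mult)
  then show ?thesis
    using False assms(2) by (simp add: divide_simps)
qed simp

lemma vecs_nonzero_coordinate:
  assumes "m \<in> vecs n k" "m \<noteq> zero_vec"
  shows "\<exists>j<k. \<not> n dvd m j"
proof -
  obtain j where "m j \<noteq> 0"
    using assms(2) by (auto simp: zero_vec_def fun_eq_iff)
  moreover have "j < k"
  proof (rule ccontr)
    assume "\<not> j < k"
    with assms(1) have "m j = 0"
      by (simp add: vecs_def)
    with \<open>m j \<noteq> 0\<close> show False ..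
  qed
  moreover have "0 \<le> m j" "m j < n"
    using assms(1) \<open>j < k\<close> by (simp_all add: vecs_def)
  ultimately have "\<not> n dvd m j"
    using zdvd_imp_le by fastforce
  with \<open>j < k\<close> show ?thesis by blast
qed

lemma provides_secrecy_if_prime_divisors_ge:
  assumes pmin: "\<forall>q. prime q \<and> q dvd n \<longrightarrow> p \<le> q"
    and "n > 0" "k \<ge> 1" "p \<ge> 2"
  shows "provides_secrecy n k (1 / (real_of_int (p - 1) * real_of_int n ^ (k - 1))) (vecs n k - {zero_vec})"
  unfolding provides_secrecy_def
proof (intro ballI impI)
  fix m c assume m: "m \<in> vecs n k - {zero_vec}" and c: "c \<in> ciphertexts n k"
  obtain j where "j < k" "\<not> n dvd m j"
    using m by (auto dest: vecs_nonzero_coordinate)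
  obtain k' where k': "k = Suc k'"
    using \<open>k \<ge> 1\<close> by (cases k) auto
  let ?N = "card {(m', \<kappa>) \<in> sources n k \<times> keys n k. m' = m \<and> enc n k \<kappa> m' = c}"
  let ?D = "card {(m', \<kappa>) \<in> sources n k \<times> keys n k. enc n k \<kappa> m' = c}"
  let ?Y = "card {y \<in> unit_vecs n k. Upsilon n k y m = snd c}"
  have "?N * (nat (p - 1) * nat n ^ (k - 1)) \<le> ?Y * nat (p - 1) * nat n ^ (k - 1)"
    using card_enc_fixed_source_le[of n k m c] by (simp add: mult.assoc)
  also have "\<dots> \<le> card (unit_vecs n k) * nat n ^ (k - 1)"
    using card_unit_vecs_Upsilon_eq_le[where m = m, OF pmin \<open>n > 0\<close> \<open>j < k\<close> \<open>\<not> n dvd m j\<close>] by simp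
  also have "\<dots> \<le> ?D"
    using card_enc_preimage_ge[OF \<open>n > 0\<close>] c by (simp add: k')
  finally have "real ?N / real ?D \<le> 1 / real (nat (p - 1) * nat n ^ (k - 1))"
    by (rule of_nat_divide_le_one_divide) (use assms in simp)
  then show "cond_prob_source n k m c \<le> 1 / (real_of_int (p - 1) * real_of_int n ^ (k - 1))"
    using assms by (simp add: cond_prob_source_def)
qed

definition ct_diff :: "int \<Rightarrow> (nat \<Rightarrow> int) \<times> int \<Rightarrow> (nat \<Rightarrow> int) \<times> int \<Rightarrow> nat \<Rightarrow> int" where
  "ct_diff n c c' = (\<lambda>i. (fst c' i - fst c i) mod n)"

lemma Upsilon_ct_diff:
  assumes "dec n k (x, y) c' \<noteq> None"
  shows "[(\<Sum>i<k. ct_diff n (enc n k (x, y) m) c' i * y i) = snd c' - snd (enc n k (x, y) m)] (mod n)"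
proof -
  let ?m' = "vec_diff n k (fst c') x"
  obtain cv t where c': "c' = (cv, t)"
    by (cases c')
  have "Upsilon n k y ?m' = snd c'"
    using assms by (simp add: c' dec_def vec_diff_def Let_def split: if_splits)
  then have "[(\<Sum>i<k. ?m' i * y i) = snd c'] (mod n)"
    unfolding Upsilon_def cong_def by (metis mod_mod_trivial)
  moreover have "[(\<Sum>i<k. m i * y i) = snd (enc n k (x, y) m)] (mod n)"
    by (simp add: enc_def Upsilon_def cong_def)
  ultimately have diff: "[(\<Sum>i<k. ?m' i * y i) - (\<Sum>i<k. m i * y i) = snd c' - snd (enc n k (x, y) m)] (mod n)"
    by (rule cong_diff)
  have "[(\<Sum>i<k. ct_diff n (enc n k (x, y) m) c' i * y i)
      = (\<Sum>i<k. ?m' i * y i) - (\<Sum>i<k. m i * y i)] (mod n)"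
  proof -
    have "[ct_diff n (enc n k (x, y) m) c' i * y i = (?m' i - m i) * y i] (mod n)" if "i < k" for i
    proof (rule cong_scalar_right)
      have "[ct_diff n (enc n k (x, y) m) c' i = fst c' i - x i - m i] (mod n)"
        using that by (simp add: ct_diff_def enc_def cong_def mod_diff_right_eq diff_diff_eq add.commute)
      moreover have "[?m' i - m i = fst c' i - x i - m i] (mod n)"
        using that by (simp add: vec_diff_def cong_def mod_diff_left_eq)
      ultimately show "[ct_diff n (enc n k (x, y) m) c' i = ?m' i - m i] (mod n)"
        by (rule cong_trans[OF _ cong_sym])
    qed
    then have "[(\<Sum>i<k. ct_diff n (enc n k (x, y) m) c' i * y i) = (\<Sum>i<k. (?m' i - m i) * y i)] (mod n)"
      by (intro cong_sum) auto
    then show ?thesis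
      by (simp add: left_diff_distrib sum_subtractf)
  qed
  then show ?thesis
    using diff by (rule cong_trans)
qed

lemma ct_diff_nonzero:
  assumes "c \<in> ciphertexts n k" "c' \<in> ciphertexts n k" "c' \<noteq> c"
    and "[(\<Sum>i<k. ct_diff n c c' i * y i) = snd c' - snd c] (mod n)"
  shows "\<exists>i<k. ct_diff n c c' i \<noteq> 0"
proof (rule ccontr)
  assume "\<not> (\<exists>i<k. ct_diff n c c' i \<noteq> 0)"
  then have zero: "ct_diff n c c' i = 0" if "i < k" for i
    using that by blast
  have "fst c' = fst c"
    using assms(1,2) zero
    by (intro vecs_eqI) (auto simp: ciphertexts_def ct_diff_def cong_iff_dvd_diff mod_eq_0_iff_dvd dvd_diff_commute)
  moreover have "[snd c' = snd c] (mod n)"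
    using assms(4) zero by (simp add: cong_iff_dvd_diff dvd_diff_commute)
  then have "snd c' = snd c"
    using assms(1,2) by (auto simp: ciphertexts_def intro: cong_less_imp_eq_int)
  ultimately show False
    using \<open>c' \<noteq> c\<close> by (simp add: prod_eq_iff)
qed

definition successful_forgeries ::
  "int \<Rightarrow> nat \<Rightarrow> ((nat \<Rightarrow> int) \<times> int \<Rightarrow> (nat \<Rightarrow> int) \<times> int)
     \<Rightarrow> ((nat \<Rightarrow> int) \<times> (nat \<Rightarrow> int) \<times> (nat \<Rightarrow> int)) set" where
  "successful_forgeries n k F = {(m, \<kappa>) \<in> sources n k \<times> keys n k.
     F (enc n k \<kappa> m) \<noteq> enc n k \<kappa> m \<and> dec n k \<kappa> (F (enc n k \<kappa> m)) \<noteq> None}"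

lemma successful_forgeriesD:
  assumes "(m, x, y) \<in> successful_forgeries n k F"
  shows "m \<in> vecs n k" "x \<in> vecs n k" "y \<in> unit_vecs n k"
    and "F (enc n k (x, y) m) \<noteq> enc n k (x, y) m" "dec n k (x, y) (F (enc n k (x, y) m)) \<noteq> None"
  using assms by (simp_all add: successful_forgeries_def sources_def keys_def)

text \<open>The first coordinate in which the forger alters the observed ciphertext. It depends on the
  ciphertext alone, so all keys producing the same ciphertext are rescaled at the same coordinate.\<close>

definition forged_index ::
  "int \<Rightarrow> nat \<Rightarrow> ((nat \<Rightarrow> int) \<times> int \<Rightarrow> (nat \<Rightarrow> int) \<times> int) \<Rightarrow> (nat \<Rightarrow> int) \<times> int \<Rightarrow> nat" where
  "forged_index n k F c = (LEAST i. i < k \<and> ct_diff n c (F c) i \<noteq> 0)"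

lemma forged_index_nonzero:
  assumes "n > 0" "\<forall>c\<in>ciphertexts n k. F c \<in> ciphertexts n k"
    and "(m, x, y) \<in> successful_forgeries n k F"
  shows "forged_index n k F (enc n k (x, y) m) < k"
    and "\<not> n dvd ct_diff n (enc n k (x, y) m) (F (enc n k (x, y) m)) (forged_index n k F (enc n k (x, y) m))"
proof -
  let ?c = "enc n k (x, y) m"
  have "?c \<in> ciphertexts n k"
    using \<open>n > 0\<close> by (rule enc_in_ciphertexts)
  then have "\<exists>i<k. ct_diff n ?c (F ?c) i \<noteq> 0"
    using assms successful_forgeriesD(4,5)[OF assms(3)]
    by (intro ct_diff_nonzero[where y = y] Upsilon_ct_diff) auto
  then have "forged_index n k F ?c < k \<and> ct_diff n ?c (F ?c) (forged_index n k F ?c) \<noteq> 0"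
    unfolding forged_index_def by (rule LeastI_ex[where P = "\<lambda>i. i < k \<and> ct_diff n ?c (F ?c) i \<noteq> 0"])
  then show "forged_index n k F ?c < k" "\<not> n dvd ct_diff n ?c (F ?c) (forged_index n k F ?c)"
    by (auto simp: ct_diff_def dvd_eq_mod_eq_0)
qed

definition forgery_rescale ::
  "int \<Rightarrow> nat \<Rightarrow> ((nat \<Rightarrow> int) \<times> int \<Rightarrow> (nat \<Rightarrow> int) \<times> int) \<Rightarrow> int
     \<Rightarrow> (nat \<Rightarrow> int) \<times> (nat \<Rightarrow> int) \<times> (nat \<Rightarrow> int) \<Rightarrow> (nat \<Rightarrow> int) \<times> (nat \<Rightarrow> int) \<times> (nat \<Rightarrow> int)" where
  "forgery_rescale n k F u = (\<lambda>(m, x, y).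
     let c = enc n k (x, y) m; j = forged_index n k F c; m' = scale_at n j (modular_inverse n u) m
     in (m', vec_diff n k (fst c) m', scale_at n j u y))"

lemma forgery_rescale_eq:
  "forgery_rescale n k F u (m, x, y) =
     (scale_at n (forged_index n k F (enc n k (x, y) m)) (modular_inverse n u) m,
      vec_diff n k (fst (enc n k (x, y) m))
        (scale_at n (forged_index n k F (enc n k (x, y) m)) (modular_inverse n u) m),
      scale_at n (forged_index n k F (enc n k (x, y) m)) u y)"
  by (simp add: forgery_rescale_def Let_def)

lemma forgery_rescale_preserves_enc:
  assumes "n > 0" "\<forall>c\<in>ciphertexts n k. F c \<in> ciphertexts n k" "coprime u n"
    and "(m, x, y) \<in> successful_forgeries n k F"
  shows "forgery_rescale n k F u (m, x, y) \<in> sources n k \<times> keys n k"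
    and "enc n k (snd (forgery_rescale n k F u (m, x, y))) (fst (forgery_rescale n k F u (m, x, y)))
         = enc n k (x, y) m"
proof -
  let ?c = "enc n k (x, y) m"
  let ?j = "forged_index n k F ?c"
  let ?m' = "scale_at n ?j (modular_inverse n u) m"
  have "?j < k"
    using assms(1,2,4) by (rule forged_index_nonzero)
  then show "forgery_rescale n k F u (m, x, y) \<in> sources n k \<times> keys n k"
    using assms successful_forgeriesD(1,3)[OF assms(4)] unfolding forgery_rescale_eq
    by (simp add: sources_def keys_def scale_at_in_vecs scale_at_in_unit_vecs vec_diff_in_vecs)
  have "fst ?c \<in> vecs n k"
    using enc_in_ciphertexts[OF \<open>n > 0\<close>] by (simp add: ciphertexts_def mem_Times_iff)
  moreover have "Upsilon n k (scale_at n ?j u y) ?m' = snd ?c"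
    using \<open>?j < k\<close> \<open>coprime u n\<close> by (simp add: Upsilon_scale_at cong_modular_inverse2 enc_def)
  ultimately show "enc n k (snd (forgery_rescale n k F u (m, x, y))) (fst (forgery_rescale n k F u (m, x, y)))
         = enc n k (x, y) m"
    unfolding forgery_rescale_eq by (simp add: enc_vec_diff)
qed

lemma forgery_rescale_inj:
  assumes pmin: "\<forall>q. prime q \<and> q dvd n \<longrightarrow> p \<le> q"
    and "n > 0" and F: "\<forall>c\<in>ciphertexts n k. F c \<in> ciphertexts n k"
    and T: "(m, x, y) \<in> successful_forgeries n k F" "(m', x', y') \<in> successful_forgeries n k F"
    and uv: "u \<in> {0<..<p}" "v \<in> {0<..<p}"
    and eq: "forgery_rescale n k F u (m, x, y) = forgery_rescale n k F v (m', x', y')"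
  shows "u = v \<and> (m, x, y) = (m', x', y')"
proof -
  have "coprime u n" "coprime v n"
    using uv by (auto intro: coprime_if_less_prime_divisors[OF pmin])
  let ?c = "enc n k (x, y) m"
  let ?j = "forged_index n k F ?c"
  let ?a = "ct_diff n ?c (F ?c)"
  have same_c: "enc n k (x', y') m' = ?c"
    using forgery_rescale_preserves_enc(2)[OF \<open>n > 0\<close> F \<open>coprime u n\<close> T(1)]
      forgery_rescale_preserves_enc(2)[OF \<open>n > 0\<close> F \<open>coprime v n\<close> T(2)] eq
    by simp
  note eq = eq[unfolded forgery_rescale_eq same_c]
  have "[(\<Sum>i<k. ?a i * y i) = snd (F ?c) - snd ?c] (mod n)"
    using successful_forgeriesD(5)[OF T(1)] by (rule Upsilon_ct_diff)
  moreover have "[(\<Sum>i<k. ?a i * y' i) = snd (F ?c) - snd ?c] (mod n)"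
    using Upsilon_ct_diff[where m = m', OF successful_forgeriesD(5)[OF T(2)]] unfolding same_c .
  ultimately have "[(\<Sum>i<k. ?a i * y i) = (\<Sum>i<k. ?a i * y' i)] (mod n)"
    by (rule cong_trans[OF _ cong_sym])
  moreover have "scale_at n ?j u y = scale_at n ?j v y'"
    using arg_cong[OF eq, of "snd \<circ> snd"] by (simp only: comp_def snd_conv)
  ultimately have "u = v \<and> y = y'"
    by (rule scale_at_inj[where a = ?a, OF pmin forged_index_nonzero[OF \<open>n > 0\<close> F T(1)]
          successful_forgeriesD(3)[OF T(1)] successful_forgeriesD(3)[OF T(2)] _ uv])
  then have "u = v" "y = y'"
    by simp_all
  have "coprime (modular_inverse n u) n"
    using \<open>coprime u n\<close> by (rule coprime_modular_inverse)
  moreover have "scale_at n ?j (modular_inverse n u) m = scale_at n ?j (modular_inverse n u) m'"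
    using arg_cong[OF eq, of fst] unfolding \<open>u = v\<close> by (simp only: fst_conv)
  ultimately have "m = m'"
    by (rule scale_at_cancel[OF _ forged_index_nonzero(1)[OF \<open>n > 0\<close> F T(1)]
          successful_forgeriesD(1)[OF T(1)] successful_forgeriesD(1)[OF T(2)]])
  have "x = x'"
    using successful_forgeriesD(2)[OF T(1)] successful_forgeriesD(2)[OF T(2)]
      arg_cong[OF same_c[unfolded \<open>m = m'\<close>[symmetric], symmetric], of fst]
    by (rule enc_key_unique)
  show ?thesis
    using \<open>u = v\<close> \<open>y = y'\<close> \<open>m = m'\<close> \<open>x = x'\<close> by simp
qed

lemma card_successful_forgeries_le:
  assumes pmin: "\<forall>q. prime q \<and> q dvd n \<longrightarrow> p \<le> q"
    and "n > 0" and F: "\<forall>c\<in>ciphertexts n k. F c \<in> ciphertexts n k"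
  shows "card (successful_forgeries n k F) * nat (p - 1) \<le> card (sources n k \<times> keys n k)"
proof -
  let ?g = "\<lambda>(w, u). forgery_rescale n k F u w"
  have "card (successful_forgeries n k F \<times> {0<..<p}) \<le> card (sources n k \<times> keys n k)"
  proof (rule card_inj_on_le[where f = ?g])
    show "?g ` (successful_forgeries n k F \<times> {0<..<p}) \<subseteq> sources n k \<times> keys n k"
    proof (rule image_subsetI)
      fix w assume w: "w \<in> successful_forgeries n k F \<times> {0<..<p}"
      obtain m x y u where w_eq: "w = ((m, x, y), u)"
        by (metis prod.collapse)
      with w have "(m, x, y) \<in> successful_forgeries n k F" "0 < u" "u < p"
        by simp_all
      moreover from \<open>0 < u\<close> \<open>u < p\<close> have "coprime u n"
        by (rule coprime_if_less_prime_divisors[OF pmin])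
      ultimately show "?g w \<in> sources n k \<times> keys n k"
        using forgery_rescale_preserves_enc(1)[OF \<open>n > 0\<close> F] w_eq by simp
    qed
    show "inj_on ?g (successful_forgeries n k F \<times> {0<..<p})"
      using forgery_rescale_inj[OF pmin \<open>n > 0\<close> F] by (auto intro!: inj_onI)
  qed (simp add: finite_vecs finite_keys sources_def)
  then show ?thesis
    by (simp only: card_cartesian_product card_greaterThanLessThan_int add_0)
qed

lemma secure_against_substitution_if_prime_divisors_ge:
  assumes pmin: "\<forall>q. prime q \<and> q dvd n \<longrightarrow> p \<le> q"
    and "n > 0" "p \<ge> 2"
  shows "secure_against_substitution n k (1 / real_of_int (p - 1))"
  unfolding secure_against_substitution_def
proof (intro allI impI)
  fix F assume F: "\<forall>c\<in>ciphertexts n k. F c \<in> ciphertexts n k"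
  have "subst_success_prob n k F \<le> 1 / real (nat (p - 1))"
    unfolding subst_success_prob_def successful_forgeries_def[symmetric]
    by (rule of_nat_divide_le_one_divide[OF card_successful_forgeries_le[OF pmin \<open>n > 0\<close> F]])
      (use \<open>p \<ge> 2\<close> in simp)
  then show "subst_success_prob n k F \<le> 1 / real_of_int (p - 1)"
    using \<open>p \<ge> 2\<close> by simp
qed

theorem mainTheorem5:
  fixes n p :: int and k :: nat
  assumes "n > 1" and "odd n" and "k \<ge> 1"
    and "prime p" and "p dvd n" and "\<forall>q. prime q \<and> q dvd n \<longrightarrow> p \<le> q"
  shows "auth_code_with_secrecy n k
           (1 / (real_of_int (p - 1) * real_of_int n ^ (k - 1)))
           (1 / real_of_int (p - 1))
           (vecs n k - {zero_vec})"
proof -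
  have "n > 0" "p \<ge> 2"
    using \<open>n > 1\<close> \<open>prime p\<close> prime_ge_2_int by auto
  then show ?thesis
    unfolding auth_code_with_secrecy_def
    using provides_secrecy_if_prime_divisors_ge secure_against_substitution_if_prime_divisors_ge assms
    by blast
qed

end
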